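(* Let $f,h:\mathbb{R}^p\to\mathbb{R}$ be convex functions and suppose that the set of minimizers of $\mathcal{L}(\beta)=f(\beta)+h(\beta)$ over $\mathbb{R}^p$ is nonempty. Let $D=\mathrm{diag}(d_1,\dots,d_p)$ with all $d_j>0$, let $\gamma\in(0,1)$, and let $\hat\beta^0\in\mathbb{R}^p$ be arbitrary. Consider the alternating linearization method (described in the context) run with the stopping test omitted, so that it generates infinite sequences $\{\hat\beta^k\}$, $\{s_f^k\}$, $\{s_h^k\}$. Then the sequence $\{\hat\beta^k\}$ converges to a minimizer $\beta^*$ of $\mathcal{L}$. Moreover, every accumulation point $(s_f^*,s_h^* )$ of the sequence $\{(s_f^k,s_h^k)\}$ satisfies $s_f^*\in\partial f(\beta^* )$, $s_h^*\in\partial h(\beta^* )$, and $s_f^*+s_h^*=0$.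
   Context: Notation: $\|v\|_D^2=v^TDv$. The alternating linearization method: set $\tilde\beta_f^0=\hat\beta^0$ and choose an arbitrary subgradient $s_f^0\in\partial f(\tilde\beta_f^0)$. At iteration $k$ (suppressing $k$; $\hat\beta$ is the current center, $s_f$ the current subgradient of $f$ at the current point $\tilde\beta_f$): (1) $h$-subproblem: with $\tilde f(\beta)=f(\tilde\beta_f)+s_f^T(\beta-\tilde\beta_f)$, let $\tilde\beta_h$ be the minimizer of $\tilde f(\beta)+h(\beta)+\tfrac12\|\beta-\hat\beta\|_D^2$, and set $s_h=-s_f-D(\tilde\beta_h-\hat\beta)$ (so $s_h\in\partial h(\tilde\beta_h)$). (2) $f$-subproblem: with $\tilde h(\beta)=h(\tilde\beta_h)+s_h^T(\beta-\tilde\beta_h)$, let the new $\tilde\beta_f$ be the minimizer of $f(\beta)+\tilde h(\beta)+\tfrac12\|\beta-\hat\beta\|_D^2$, and set the new $s_f=-s_h-D(\tilde\beta_f-\hat\beta)$ (so $s_f\in\partial f(\tilde\beta_f)$). (3) Update step: if $f(\tilde\beta_f)+h(\tilde\beta_f)\le(1-\gamma)\big[f(\hat\beta)+h(\hat\beta)\big]+\gamma\big[f(\tilde\beta_f)+\tilde h(\tilde\beta_f)\big]$, then set $\hat\beta\leftarrow\tilde\beta_f$; otherwise $\hat\beta$ is unchanged. The values after iteration $k$ are $\hat\beta^{k}$, $s_f^k$, $s_h^k$. (The stopping test, which would terminate when $f(\tilde\beta_f)+\tilde h(\tilde\beta_f)\ge f(\hat\beta)+h(\hat\beta)-\varepsilon$,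 is not applied.) *)

theory Defs
  imports "HOL-Analysis.Analysis"
begin

definition subgrad :: "(real^'n \<Rightarrow> real) \<Rightarrow> real^'n \<Rightarrow> (real^'n) set" where
  "subgrad f x = {s. \<forall>y. f y \<ge> f x + s \<bullet> (y - x)}"

definition diag_mult :: "real^'n \<Rightarrow> real^'n \<Rightarrow> real^'n" where
  "diag_mult d v = (\<chi> j. d $ j * v $ j)"

definition Dnorm2 :: "real^'n \<Rightarrow> real^'n \<Rightarrow> real" where
  "Dnorm2 d v = (\<Sum>j\<in>UNIV. d $ j * (v $ j)^2)"

definition is_minimizer :: "(real^'n \<Rightarrow> real) \<Rightarrow> real^'n \<Rightarrow> bool" where
  "is_minimizer F x \<longleftrightarrow> (\<forall>y. F x \<le> F y)"

text \<open>The alternating linearization method (stopping test omitted).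
  State after iteration k: centre bhat k, f-point bf k, subgradient sf k,
  h-point bh k, subgradient sh k (bh 0, sh 0 are not used).\<close>
definition alin_run ::
  "(real^'n \<Rightarrow> real) \<Rightarrow> (real^'n \<Rightarrow> real) \<Rightarrow> real^'n \<Rightarrow> real \<Rightarrow>
   (nat \<Rightarrow> real^'n) \<Rightarrow> (nat \<Rightarrow> real^'n) \<Rightarrow> (nat \<Rightarrow> real^'n) \<Rightarrow>
   (nat \<Rightarrow> real^'n) \<Rightarrow> (nat \<Rightarrow> real^'n) \<Rightarrow> bool" where
  "alin_run f h d \<gamma> bhat bf sf bh sh \<longleftrightarrow>
     bf 0 = bhat 0 \<and> sf 0 \<in> subgrad f (bf 0) \<and>
     (\<forall>k.
        is_minimizer (\<lambda>\<beta>. f (bf k) + sf k \<bullet> (\<beta> - bf k) + h \<beta>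
                           + Dnorm2 d (\<beta> - bhat k) / 2) (bh (Suc k)) \<and>
        sh (Suc k) = - sf k - diag_mult d (bh (Suc k) - bhat k) \<and>
        is_minimizer (\<lambda>\<beta>. f \<beta> + (h (bh (Suc k)) + sh (Suc k) \<bullet> (\<beta> - bh (Suc k)))
                           + Dnorm2 d (\<beta> - bhat k) / 2) (bf (Suc k)) \<and>
        sf (Suc k) = - sh (Suc k) - diag_mult d (bf (Suc k) - bhat k) \<and>
        bhat (Suc k) =
          (if f (bf (Suc k)) + h (bf (Suc k))
                \<le> (1 - \<gamma>) * (f (bhat k) + h (bhat k))
                  + \<gamma> * (f (bf (Suc k)) + (h (bh (Suc k)) + sh (Suc k) \<bullet> (bf (Suc k) - bh (Suc k))))
           then bf (Suc k) else bhat k))"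

end

theory Submission
  imports Defs
begin

(* Write x = bhat k for the
   centre, y = bh (k+1) and z = bf (k+1) for the two subproblem solutions.
   With eta_k and zeta_k the optimal values of the h- and f-subproblems,
   m_k = f(z) + (linearized h)(z), v_k = L(x) - m_k (predicted decrease) and
   w_k = L(x) - eta_k, one shows from the optimality of the proximal steps:
   v_k <= 2 w_k, |z - x|_D^2 <= v_k, |y - x|_D^2 <= 2 w_k; a null step makes w
   decrease and bounds w_(k+1) by v_k; a serious step bounds w_(k+1) by 2 v_k;
   and L decreases by gamma * v_k at serious steps.  Consequently w_k -> 0
   (separately for infinitely many and for finitely many serious steps; the
   latter uses that linearization errors of h vanish).  Hence all steps tend
   to 0, cluster points of the centres are minimizers, and the Lyapunov
   function |bhat k - q|_D^2 + (2/gamma)(L(bhat k) - L q), decreasing for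
   every minimizer q, forces convergence of the whole sequence.  The
   subgradient claims then follow from closedness of subdifferential graphs. *)

definition dinner :: "real^'n \<Rightarrow> real^'n \<Rightarrow> real^'n \<Rightarrow> real" where
  "dinner d u v = (\<Sum>j\<in>UNIV. d $ j * u $ j * v $ j)"

lemma diag_mult_inner: "diag_mult d u \<bullet> v = dinner d u v"
  by (simp add: diag_mult_def dinner_def inner_vec_def)

lemma dinner_sym: "dinner d u v = dinner d v u"
  unfolding dinner_def by (simp add: algebra_simps)

lemma dinner_add_left: "dinner d (u + w) v = dinner d u v + dinner d w v"
  unfolding dinner_def by (simp add: algebra_simps sum.distrib)

lemma dinner_add_right: "dinner d v (u + w) = dinner d v u + dinner d v w"
  unfolding dinner_def by (simp add: algebra_simps sum.distrib)

lemma dinner_diff_left: "dinner d (u - w) v = dinner d u v - dinner d w v"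
  unfolding dinner_def by (simp add: algebra_simps sum_subtractf)

lemma dinner_diff_right: "dinner d v (u - w) = dinner d v u - dinner d v w"
  unfolding dinner_def by (simp add: algebra_simps sum_subtractf)

lemma dinner_scale_left: "dinner d (t *\<^sub>R u) v = t * dinner d u v"
  unfolding dinner_def by (simp add: algebra_simps sum_distrib_left)

lemma dinner_scale_right: "dinner d v (t *\<^sub>R u) = t * dinner d v u"
  unfolding dinner_def by (simp add: algebra_simps sum_distrib_left)

lemma Dnorm2_dinner: "Dnorm2 d u = dinner d u u"
  unfolding dinner_def Dnorm2_def by (simp add: power2_eq_square algebra_simps)

lemma Dnorm2_add: "Dnorm2 d (u + v) = Dnorm2 d u + 2 * dinner d u v + Dnorm2 d v"
  unfolding Dnorm2_dinner dinner_add_left dinner_add_right by (simp add: dinner_sym[of d v u])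

lemma Dnorm2_diff: "Dnorm2 d (u - v) = Dnorm2 d u - 2 * dinner d u v + Dnorm2 d v"
  unfolding Dnorm2_dinner dinner_diff_left dinner_diff_right by (simp add: dinner_sym[of d v u])

lemma Dnorm2_scale: "Dnorm2 d (t *\<^sub>R u) = t^2 * Dnorm2 d u"
  unfolding Dnorm2_dinner dinner_scale_left dinner_scale_right by (simp add: power2_eq_square)

lemma Dnorm2_split:
  "Dnorm2 d (a - c) = Dnorm2 d (b - c) + 2 * dinner d (b - c) (a - b) + Dnorm2 d (a - b)"
  using Dnorm2_add[of d "b - c" "a - b"] by simp

lemma Dnorm2_commute: "Dnorm2 d (a - b) = Dnorm2 d (b - a)"
  by (simp add: Dnorm2_def power2_commute)

lemma Dnorm2_zero [simp]: "Dnorm2 d 0 = 0"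
  by (simp add: Dnorm2_def)

lemma diag_mult_zero [simp]: "diag_mult d 0 = 0"
  by (simp add: diag_mult_def vec_eq_iff)

lemma Dnorm2_nonneg: "\<forall>j. d $ j > 0 \<Longrightarrow> 0 \<le> Dnorm2 d u"
  unfolding Dnorm2_def by (intro sum_nonneg) (simp add: less_imp_le)

lemma Dnorm2_lower:
  assumes "\<forall>j. d $ j > 0"
  obtains c where "c > 0" "\<And>u. c * (norm u)^2 \<le> Dnorm2 d u"
proof
  let ?c = "Min (range (\<lambda>j. d $ j))"
  have fin: "finite (range (\<lambda>j. d $ j))" by simp
  show "?c > 0" using assms fin by (subst Min_gr_iff) auto
  have "?c \<le> d $ j" for j using fin by (intro Min_le) auto
  hence "(\<Sum>j\<in>UNIV. ?c * (u $ j)^2) \<le> Dnorm2 d u" for u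
    unfolding Dnorm2_def by (intro sum_mono mult_right_mono) auto
  moreover have "(norm u)^2 = (\<Sum>j\<in>UNIV. (u $ j)^2)" for u :: "real^'a"
  proof -
    have "(norm u)^2 = u \<bullet> u" by (rule power2_norm_eq_inner)
    thus ?thesis by (simp add: inner_vec_def power2_eq_square)
  qed
  ultimately show "?c * (norm u)^2 \<le> Dnorm2 d u" for u
    by (simp add: sum_distrib_left)
qed

lemma Dnorm2_sublevel_bounded:
  assumes "\<forall>j. d $ j > 0"
  obtains R where "\<And>u. Dnorm2 d (u - x) \<le> B \<Longrightarrow> u \<in> cball x R"
proof -
  obtain c where c: "c > 0" "\<And>u. c * (norm u)^2 \<le> Dnorm2 d u"
    using Dnorm2_lower[OF assms] by blast
  have "u \<in> cball x (sqrt (B / c))" if "Dnorm2 d (u - x) \<le> B" for u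
  proof -
    have "c * (norm (u - x))^2 \<le> B" using c(2)[of "u - x"] that by linarith
    hence "(norm (u - x))^2 \<le> B / c" using c(1) by (simp add: field_simps mult.commute)
    hence "norm (u - x) \<le> sqrt (B / c)" by (rule real_le_rsqrt)
    thus ?thesis by (simp add: dist_norm norm_minus_commute)
  qed
  thus ?thesis using that by blast
qed

lemma tendsto_zero_of_Dnorm2:
  assumes "\<forall>j. d $ j > 0" "(\<lambda>n. Dnorm2 d (u n)) \<longlonglongrightarrow> 0"
  shows "u \<longlonglongrightarrow> 0"
proof -
  obtain c where c: "c > 0" "\<And>u. c * (norm u)^2 \<le> Dnorm2 d u"
    using Dnorm2_lower[OF assms(1)] by blast
  have "(\<lambda>n. sqrt (Dnorm2 d (u n) / c)) \<longlonglongrightarrow> sqrt (0 / c)"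
    using c(1) by (intro tendsto_intros assms(2)) auto
  hence bound: "(\<lambda>n. sqrt (Dnorm2 d (u n) / c)) \<longlonglongrightarrow> 0" by simp
  have "norm (u n) \<le> sqrt (Dnorm2 d (u n) / c)" for n
    using c(1) c(2)[of "u n"] by (intro real_le_rsqrt) (simp add: field_simps mult.commute)
  thus ?thesis by (intro Lim_null_comparison[OF _ bound]) auto
qed

lemma diag_mult_tendsto: "(u \<longlongrightarrow> l) F \<Longrightarrow> ((\<lambda>n. diag_mult d (u n)) \<longlongrightarrow> diag_mult d l) F"
proof -
  have "linear (diag_mult d)"
    by (intro linearI) (simp_all add: diag_mult_def vec_eq_iff algebra_simps)
  thus "(u \<longlongrightarrow> l) F \<Longrightarrow> ((\<lambda>n. diag_mult d (u n)) \<longlongrightarrow> diag_mult d l) F"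
    by (simp add: linear_conv_bounded_linear bounded_linear.tendsto)
qed

lemma Dnorm2_tendsto: "(u \<longlongrightarrow> l) F \<Longrightarrow> ((\<lambda>n. Dnorm2 d (u n)) \<longlongrightarrow> Dnorm2 d l) F"
  unfolding Dnorm2_def by (intro tendsto_intros)

lemma le_of_le_plus_small_multiple:
  fixes a b K :: real
  assumes "\<And>t. 0 < t \<Longrightarrow> t \<le> 1 \<Longrightarrow> a \<le> b + t * K"
  shows "a \<le> b"
proof -
  have "((\<lambda>t. b + t * K) \<longlongrightarrow> b + 0 * K) (at_right 0)" by (intro tendsto_intros)
  moreover have "eventually (\<lambda>t. a \<le> b + t * K) (at_right (0::real))"
    unfolding eventually_at_right_field using assms by (intro exI[of _ 1]) auto
  ultimately show ?thesis
    by (intro tendsto_lowerbound[of "\<lambda>t. b + t * K" _ "at_right 0"]) auto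
qed

(* Optimality of a proximal step: if y minimizes phi + <a, .> + |. - x|_D^2 / 2 with phi
   convex, then -a - D (y - x) is a subgradient of phi at y.  (Compare the objective at y
   and at y + t (w - y) and let t -> 0.) *)
lemma prox_subgrad:
  fixes \<phi> :: "real^'n \<Rightarrow> real"
  assumes cvx: "convex_on UNIV \<phi>" and dpos: "\<forall>j. d $ j > 0"
    and min: "\<And>\<beta>. \<phi> y + a \<bullet> y + Dnorm2 d (y - x) / 2 \<le> \<phi> \<beta> + a \<bullet> \<beta> + Dnorm2 d (\<beta> - x) / 2"
  shows "\<phi> w \<ge> \<phi> y + (- a - diag_mult d (y - x)) \<bullet> (w - y)"
proof -
  define G where "G = \<phi> w - \<phi> y + a \<bullet> (w - y) + dinner d (y - x) (w - y)"
  have "0 \<le> G + t * (Dnorm2 d (w - y) / 2)" if t: "0 < t" "t \<le> 1" for t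
  proof -
    define yt where "yt = (1 - t) *\<^sub>R y + t *\<^sub>R w"
    have yt: "yt - x = (y - x) + t *\<^sub>R (w - y)" "yt = y + t *\<^sub>R (w - y)"
      by (simp_all add: yt_def algebra_simps)
    have cvx_yt: "\<phi> yt \<le> (1 - t) * \<phi> y + t * \<phi> w"
      using convex_onD[OF cvx, of t y w] t by (auto simp: yt_def)
    have lin_yt: "a \<bullet> yt = a \<bullet> y + t * (a \<bullet> (w - y))"
      unfolding yt(2) by (simp add: inner_add_right)
    define P where "P = t * dinner d (y - x) (w - y)"
    define Q where "Q = t * (t * (Dnorm2 d (w - y) / 2))"
    have "Dnorm2 d (yt - x) = Dnorm2 d (y - x) + 2 * P + 2 * Q"
      unfolding yt(1) P_def Q_def
      by (simp add: Dnorm2_add Dnorm2_scale dinner_scale_right power2_eq_square)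
    hence quad_yt: "Dnorm2 d (yt - x) / 2 = Dnorm2 d (y - x) / 2 + P + Q"
      by simp
    have "\<phi> y + a \<bullet> y + Dnorm2 d (y - x) / 2
        \<le> \<phi> yt + (a \<bullet> y + t * (a \<bullet> (w - y))) + (Dnorm2 d (y - x) / 2 + P + Q)"
      using min[of yt] unfolding lin_yt quad_yt .
    moreover have "\<phi> yt \<le> \<phi> y + t * (\<phi> w - \<phi> y)"
      using cvx_yt by (simp add: algebra_simps)
    ultimately have "0 \<le> t * (\<phi> w - \<phi> y) + t * (a \<bullet> (w - y)) + P + Q"
      by linarith
    also have "\<dots> = t * (G + t * (Dnorm2 d (w - y) / 2))"
      by (simp add: G_def P_def Q_def algebra_simps)
    finally have "0 \<le> t * (G + t * (Dnorm2 d (w - y) / 2))" .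
    thus ?thesis using t by (simp add: zero_le_mult_iff)
  qed

  hence "0 \<le> G" by (rule le_of_le_plus_small_multiple)
  thus ?thesis by (simp add: G_def inner_diff_left diag_mult_inner)
qed

lemma prox_three_point:
  fixes \<phi> :: "real^'n \<Rightarrow> real"
  assumes cvx: "convex_on UNIV \<phi>" and dpos: "\<forall>j. d $ j > 0"
    and min: "\<And>\<beta>. \<phi> y + a \<bullet> y + Dnorm2 d (y - x) / 2 \<le> \<phi> \<beta> + a \<bullet> \<beta> + Dnorm2 d (\<beta> - x) / 2"
  shows "\<phi> y + a \<bullet> y + Dnorm2 d (y - x) / 2 + Dnorm2 d (w - y) / 2
           \<le> \<phi> w + a \<bullet> w + Dnorm2 d (w - x) / 2"
proof -
  have "\<phi> w \<ge> \<phi> y + (- a - diag_mult d (y - x)) \<bullet> (w - y)"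
    by (rule prox_subgrad[OF cvx dpos min])
  hence "\<phi> w \<ge> \<phi> y - a \<bullet> w + a \<bullet> y - dinner d (y - x) (w - y)"
    by (simp add: inner_diff_left inner_diff_right diag_mult_inner dinner_diff_right)
  thus ?thesis using Dnorm2_split[of d w x y] by linarith
qed

(* Subgradients of a continuous function are uniformly bounded at points of a ball (test
   the subgradient inequality in the direction of s). *)
lemma subgrad_norm_bounded:
  fixes h :: "'a::euclidean_space \<Rightarrow> real"
  assumes hc: "continuous_on UNIV h"
  shows "\<exists>M. \<forall>y s. y \<in> cball x R \<longrightarrow> (\<forall>\<beta>. h \<beta> \<ge> h y + s \<bullet> (\<beta> - y)) \<longrightarrow> norm s \<le> M"
proof -
  have "compact (h ` cball x (R + 1))"
    by (intro compact_continuous_image continuous_on_subset[OF hc]) auto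
  then obtain B where B: "\<And>u. u \<in> cball x (R + 1) \<Longrightarrow> norm (h u) \<le> B"
    using compact_imp_bounded[of "h ` cball x (R + 1)"] unfolding bounded_iff by blast
  have "norm s \<le> 2 * B"
    if y: "y \<in> cball x R" and s: "\<forall>\<beta>. h \<beta> \<ge> h y + s \<bullet> (\<beta> - y)" for y s
  proof (cases "s = 0")
    case True
    have "norm (h y) \<le> B" using B y by auto
    hence "0 \<le> B" by (meson norm_ge_zero order_trans)
    thus ?thesis using True by simp
  next
    case False
    define \<beta> where "\<beta> = y + (1 / norm s) *\<^sub>R s"
    have "dist y \<beta> = 1" using False by (simp add: \<beta>_def dist_norm)
    hence "norm (h \<beta>) \<le> B" using B y dist_triangle[of x \<beta> y] by auto
    moreover have "norm (h y) \<le> B" using B y by auto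
    moreover have "s \<bullet> (\<beta> - y) = norm s" using False
      by (simp add: \<beta>_def power2_norm_eq_inner[symmetric] power2_eq_square)
    hence "h \<beta> \<ge> h y + norm s" using s by metis
    ultimately show ?thesis by (simp add: abs_le_iff)
  qed
  thus ?thesis by blast
qed

(* Linearization errors vanish: if a n and b n stay in a ball, a n - b n -> 0 and s n are
   subgradients at b n, then h (a n) - h (b n) - <s n, a n - b n> -> 0.  This is what
   drives w to 0 when only null steps occur. *)
lemma linearization_error_tendsto_zero:
  fixes h :: "'a::euclidean_space \<Rightarrow> real"
  assumes hc: "continuous_on UNIV h"
    and a: "\<And>n. a n \<in> cball x R" and b: "\<And>n. b n \<in> cball x R"
    and ab: "(\<lambda>n. a n - b n) \<longlonglongrightarrow> 0"
    and sub: "\<And>n \<beta>. h \<beta> \<ge> h (b n) + s n \<bullet> (\<beta> - b n)"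
  shows "(\<lambda>n. h (a n) - h (b n) - s n \<bullet> (a n - b n)) \<longlonglongrightarrow> 0"
proof -
  have "uniformly_continuous_on (cball x R) h"
    by (intro compact_uniformly_continuous continuous_on_subset[OF hc]) auto
  moreover have "(\<lambda>n. dist (a n) (b n)) \<longlonglongrightarrow> 0"
    using ab by (simp add: dist_norm tendsto_norm_zero_iff)
  ultimately have "(\<lambda>n. dist (h (a n)) (h (b n))) \<longlonglongrightarrow> 0"
    using a b unfolding uniformly_continuous_on_sequentially by blast
  hence hdiff: "(\<lambda>n. h (a n) - h (b n)) \<longlonglongrightarrow> 0"
    by (simp add: dist_real_def tendsto_rabs_zero_iff)
  obtain M where "\<forall>y s. y \<in> cball x R \<longrightarrow> (\<forall>\<beta>. h \<beta> \<ge> h y + s \<bullet> (\<beta> - y)) \<longrightarrow> norm s \<le> M"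
    using subgrad_norm_bounded[OF hc] by blast
  hence M: "norm (s n) \<le> M" for n
    using b[of n] sub[of n] by blast
  have le: "norm (s n \<bullet> (a n - b n)) \<le> M * norm (a n - b n)" for n
  proof -
    have "norm (s n \<bullet> (a n - b n)) \<le> norm (s n) * norm (a n - b n)"
      using Cauchy_Schwarz_ineq2 by simp
    also have "\<dots> \<le> M * norm (a n - b n)" by (intro mult_right_mono M) auto
    finally show ?thesis .
  qed
  have "(\<lambda>n. M * norm (a n - b n)) \<longlonglongrightarrow> 0"
    by (rule tendsto_mult_right_zero[OF tendsto_norm_zero[OF ab]])
  hence "(\<lambda>n. s n \<bullet> (a n - b n)) \<longlonglongrightarrow> 0"
    by (rule Lim_null_comparison[OF always_eventually, rotated]) (use le in blast)
  from tendsto_diff[OF hdiff this] show ?thesis by simp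
qed

lemma subgrad_closed:
  fixes f :: "real^'n \<Rightarrow> real"
  assumes "isCont f x" and "xs \<longlonglongrightarrow> x" and "ss \<longlonglongrightarrow> s"
    and "eventually (\<lambda>n. ss n \<in> subgrad f (xs n)) sequentially"
  shows "s \<in> subgrad f x"
  unfolding subgrad_def
proof (intro CollectI allI)
  fix y
  have "(\<lambda>n. f (xs n) + ss n \<bullet> (y - xs n)) \<longlonglongrightarrow> f x + s \<bullet> (y - x)"
    using assms(1-3) by (intro tendsto_intros isCont_tendsto_compose[OF assms(1)])
  moreover have "eventually (\<lambda>n. f (xs n) + ss n \<bullet> (y - xs n) \<le> f y) sequentially"
    using assms(4) by eventually_elim (simp add: subgrad_def)
  ultimately show "f y \<ge> f x + s \<bullet> (y - x)"
    by (rule tendsto_le[OF trivial_limit_sequentially tendsto_const])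
qed

lemma decseq_tendsto_zero_from_subseq:
  fixes \<Psi> :: "nat \<Rightarrow> real"
  assumes "decseq \<Psi>" "\<And>k. 0 \<le> \<Psi> k" "strict_mono r" "(\<lambda>n. \<Psi> (r n)) \<longlonglongrightarrow> 0"
  shows "\<Psi> \<longlonglongrightarrow> 0"
proof -
  obtain l where l: "\<Psi> \<longlonglongrightarrow> l"
    using decseq_convergent[OF assms(1), of 0] assms(2) by blast
  have "(\<lambda>n. \<Psi> (r n)) \<longlonglongrightarrow> l"
    using LIMSEQ_subseq_LIMSEQ[OF l assms(3)] by (simp add: comp_def)
  with assms(4) have "0 = l" by (rule LIMSEQ_unique)
  with l show ?thesis by simp
qed

(* One run of the method.  Inside the locale, x = bhat k is the centre, y = bh (k+1) the
   solution of the h-subproblem and z = bf (k+1) the solution of the f-subproblem of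
   iteration k. *)
locale alin =
  fixes f h :: "real^'n \<Rightarrow> real" and d :: "real^'n" and \<gamma> :: real
    and bhat bf sf bh sh :: "nat \<Rightarrow> real^'n"
  assumes f_convex: "convex_on UNIV f" and h_convex: "convex_on UNIV h"
    and d_pos: "\<forall>j. d $ j > 0" and \<gamma>_pos: "0 < \<gamma>" and \<gamma>_less_1: "\<gamma> < 1"
    and run: "alin_run f h d \<gamma> bhat bf sf bh sh"
begin

definition obj :: "real^'n \<Rightarrow> real" where "obj \<beta> = f \<beta> + h \<beta>"

definition lin_f :: "nat \<Rightarrow> real^'n \<Rightarrow> real" where
  "lin_f k \<beta> = f (bf k) + sf k \<bullet> (\<beta> - bf k)"

definition lin_h :: "nat \<Rightarrow> real^'n \<Rightarrow> real" where
  "lin_h k \<beta> = h (bh (Suc k)) + sh (Suc k) \<bullet> (\<beta> - bh (Suc k))"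

(* eta k: optimal value of the h-subproblem; model k: value at z of f plus the linearized
   h; zeta k: optimal value of the f-subproblem. *)
definition eta :: "nat \<Rightarrow> real" where
  "eta k = lin_f k (bh (Suc k)) + h (bh (Suc k)) + Dnorm2 d (bh (Suc k) - bhat k) / 2"

definition model :: "nat \<Rightarrow> real" where
  "model k = f (bf (Suc k)) + lin_h k (bf (Suc k))"

definition zeta :: "nat \<Rightarrow> real" where
  "zeta k = model k + Dnorm2 d (bf (Suc k) - bhat k) / 2"

(* v k = L(x) - model k is the predicted decrease, w k = L(x) - eta k the gap of the
   h-subproblem; both are nonnegative and w controls all step lengths. *)
definition v :: "nat \<Rightarrow> real" where "v k = obj (bhat k) - model k"

definition w :: "nat \<Rightarrow> real" where "w k = obj (bhat k) - eta k"

(* Serious steps move the centre; sigma k is the decrease certified at step k. *)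
definition serious :: "nat \<Rightarrow> bool" where
  "serious k \<longleftrightarrow> obj (bf (Suc k)) \<le> (1 - \<gamma>) * obj (bhat k) + \<gamma> * model k"

definition \<sigma> :: "nat \<Rightarrow> real" where "\<sigma> k = (if serious k then v k else 0)"

lemma sf_0: "sf 0 \<in> subgrad f (bf 0)"
  using run by (auto simp: alin_run_def)

lemma h_step: "is_minimizer (\<lambda>\<beta>. lin_f k \<beta> + h \<beta> + Dnorm2 d (\<beta> - bhat k) / 2) (bh (Suc k))"
  and sh_eq: "sh (Suc k) = - sf k - diag_mult d (bh (Suc k) - bhat k)"
  and f_step: "is_minimizer (\<lambda>\<beta>. f \<beta> + lin_h k \<beta> + Dnorm2 d (\<beta> - bhat k) / 2) (bf (Suc k))"
  and sf_eq: "sf (Suc k) = - sh (Suc k) - diag_mult d (bf (Suc k) - bhat k)"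
  and bhat_Suc: "bhat (Suc k) = (if serious k then bf (Suc k) else bhat k)"
  using run unfolding alin_run_def lin_f_def lin_h_def serious_def obj_def model_def
  by blast+

lemma Dnorm2_ge_0: "0 \<le> Dnorm2 d u"
  by (rule Dnorm2_nonneg[OF d_pos])

lemma f_continuous: "continuous_on UNIV f"
  by (rule convex_on_continuous[OF open_UNIV f_convex])

lemma h_continuous: "continuous_on UNIV h"
  by (rule convex_on_continuous[OF open_UNIV h_convex])

(* The two subproblems written in the form required by prox_subgrad. *)
lemma h_step_optimality: "h (bh (Suc k)) + sf k \<bullet> bh (Suc k) + Dnorm2 d (bh (Suc k) - bhat k) / 2
   \<le> h \<beta> + sf k \<bullet> \<beta> + Dnorm2 d (\<beta> - bhat k) / 2"
  using h_step[of k] unfolding is_minimizer_def lin_f_def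
  by (auto simp: inner_diff_right dest: spec[of _ \<beta>])

lemma f_step_optimality: "f (bf (Suc k)) + sh (Suc k) \<bullet> bf (Suc k) + Dnorm2 d (bf (Suc k) - bhat k) / 2
   \<le> f \<beta> + sh (Suc k) \<bullet> \<beta> + Dnorm2 d (\<beta> - bhat k) / 2"
  using f_step[of k] unfolding is_minimizer_def lin_h_def
  by (auto simp: inner_diff_right dest: spec[of _ \<beta>])

lemma sh_subgrad_ineq: "h \<beta> \<ge> lin_h k \<beta>"
  unfolding lin_h_def sh_eq by (rule prox_subgrad[OF h_convex d_pos h_step_optimality])

lemma sf_subgrad: "sf k \<in> subgrad f (bf k)"
proof (cases k)
  case 0 thus ?thesis using sf_0 by simp
next
  case (Suc j)
  show ?thesis unfolding Suc subgrad_def sf_eq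
    by (intro CollectI allI prox_subgrad[OF f_convex d_pos f_step_optimality])
qed

lemma sh_subgrad: "sh (Suc k) \<in> subgrad h (bh (Suc k))"
  using sh_subgrad_ineq by (simp add: subgrad_def lin_h_def)

lemma lin_f_le: "lin_f k \<beta> \<le> f \<beta>"
  using sf_subgrad[of k] by (simp add: subgrad_def lin_f_def)

lemma h_step_three_point:
  "eta k + Dnorm2 d (\<beta> - bh (Suc k)) / 2 \<le> lin_f k \<beta> + h \<beta> + Dnorm2 d (\<beta> - bhat k) / 2"
  using prox_three_point[OF h_convex d_pos h_step_optimality[where k=k], where w=\<beta>]
  unfolding eta_def lin_f_def inner_diff_right by linarith

lemma f_step_three_point:
  "zeta k + Dnorm2 d (\<beta> - bf (Suc k)) / 2 \<le> f \<beta> + lin_h k \<beta> + Dnorm2 d (\<beta> - bhat k) / 2"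
  using prox_three_point[OF f_convex d_pos f_step_optimality[where k=k], where w=\<beta>]
  unfolding zeta_def model_def lin_h_def inner_diff_right by linarith

(* The sum of both linearizations plus the proximal term equals eta k + |beta - y|_D^2 /
   2 exactly, because sf k + sh (k+1) = -D (y - x). *)
lemma aggregate_model_identity:
  "lin_f k \<beta> + lin_h k \<beta> + Dnorm2 d (\<beta> - bhat k) / 2 = eta k + Dnorm2 d (\<beta> - bh (Suc k)) / 2"
proof -
  have "lin_f k \<beta> = lin_f k (bh (Suc k)) + sf k \<bullet> (\<beta> - bh (Suc k))"
    by (simp add: lin_f_def inner_diff_right)
  moreover have "lin_h k \<beta> = h (bh (Suc k)) - sf k \<bullet> (\<beta> - bh (Suc k))
                  - dinner d (bh (Suc k) - bhat k) (\<beta> - bh (Suc k))"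
    by (simp add: lin_h_def sh_eq inner_diff_left diag_mult_inner)
  ultimately show ?thesis
    using Dnorm2_split[of d \<beta> "bhat k" "bh (Suc k)"] unfolding eta_def by linarith
qed

lemma zeta_ge_eta: "eta k + Dnorm2 d (bf (Suc k) - bh (Suc k)) / 2 \<le> zeta k"
  using aggregate_model_identity[of k "bf (Suc k)"] lin_f_le[of k "bf (Suc k)"]
  unfolding zeta_def model_def by linarith

lemma sum_subgrads: "sf (Suc k) + sh (Suc k) = - diag_mult d (bf (Suc k) - bhat k)"
  by (simp add: sf_eq)

(* Combining both subgradient inequalities at z: a lower bound for L by the model value. *)
lemma obj_lower_bound:
  "model k + dinner d (bf (Suc k) - bhat k) (bf (Suc k) - \<beta>) \<le> obj \<beta>"
proof -
  have "f \<beta> \<ge> f (bf (Suc k)) + sf (Suc k) \<bullet> (\<beta> - bf (Suc k))"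
    using sf_subgrad[of "Suc k"] by (simp add: subgrad_def)
  moreover have "h \<beta> \<ge> lin_h k (bf (Suc k)) + sh (Suc k) \<bullet> (\<beta> - bf (Suc k))"
    using sh_subgrad_ineq[of k \<beta>] by (simp add: lin_h_def inner_diff_right)
  moreover have "sf (Suc k) \<bullet> (\<beta> - bf (Suc k)) + sh (Suc k) \<bullet> (\<beta> - bf (Suc k))
      = dinner d (bf (Suc k) - bhat k) (bf (Suc k) - \<beta>)"
    by (simp add: sf_eq inner_diff_left diag_mult_inner dinner_diff_right)
  ultimately show ?thesis unfolding obj_def model_def by linarith
qed

(* Lower bound for the next h-subproblem value, obtained by evaluating its objective with
   the old linearization of h. *)
lemma eta_Suc_lower_bound:
  "model k + dinner d (bf (Suc k) - bhat k) (bf (Suc k) - bh (Suc (Suc k)))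
     + Dnorm2 d (bh (Suc (Suc k)) - bhat (Suc k)) / 2 \<le> eta (Suc k)"
proof -
  have "lin_f (Suc k) (bh (Suc (Suc k)))
      = f (bf (Suc k)) + sf (Suc k) \<bullet> (bh (Suc (Suc k)) - bf (Suc k))"
    by (simp add: lin_f_def)
  moreover have "h (bh (Suc (Suc k))) \<ge> lin_h k (bf (Suc k)) + sh (Suc k) \<bullet> (bh (Suc (Suc k)) - bf (Suc k))"
    using sh_subgrad_ineq[of k "bh (Suc (Suc k))"] by (simp add: lin_h_def inner_diff_right)
  moreover have "sf (Suc k) \<bullet> (bh (Suc (Suc k)) - bf (Suc k)) + sh (Suc k) \<bullet> (bh (Suc (Suc k)) - bf (Suc k))
      = dinner d (bf (Suc k) - bhat k) (bf (Suc k) - bh (Suc (Suc k)))"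
    by (simp add: sf_eq inner_diff_left diag_mult_inner dinner_diff_right)
  ultimately show ?thesis unfolding eta_def model_def by linarith
qed

lemma w_ge: "Dnorm2 d (bh (Suc k) - bhat k) / 2 \<le> w k"
  using h_step_three_point[of k "bhat k"] lin_f_le[of k "bhat k"]
    Dnorm2_commute[of d "bhat k" "bh (Suc k)"]
  by (simp add: w_def obj_def)

lemma w_nonneg: "0 \<le> w k"
  using w_ge[of k] Dnorm2_ge_0[of "bh (Suc k) - bhat k"] by linarith

lemma obj_center_ge_zeta: "zeta k + Dnorm2 d (bf (Suc k) - bhat k) / 2 \<le> obj (bhat k)"
  using f_step_three_point[of k "bhat k"] sh_subgrad_ineq[of k "bhat k"]
    Dnorm2_commute[of d "bhat k" "bf (Suc k)"]
  by (simp add: obj_def)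

lemma v_ge: "Dnorm2 d (bf (Suc k) - bhat k) \<le> v k"
  using obj_center_ge_zeta[of k] by (simp add: v_def zeta_def)

lemma v_nonneg: "0 \<le> v k"
  using v_ge[of k] Dnorm2_ge_0[of "bf (Suc k) - bhat k"] by linarith

lemma v_le_w: "v k \<le> 2 * w k"
  using obj_center_ge_zeta[of k] zeta_ge_eta[of k] Dnorm2_ge_0[of "bf (Suc k) - bh (Suc k)"]
  by (simp add: v_def w_def zeta_def)

lemma null_step_w:
  assumes "\<not> serious k"
  shows "w (Suc k) \<le> w k - Dnorm2 d (bf (Suc k) - bh (Suc k)) / 2
                         - Dnorm2 d (bh (Suc (Suc k)) - bf (Suc k)) / 2"
    and "w (Suc k) \<le> v k"
proof -
  have center: "bhat (Suc k) = bhat k" using bhat_Suc[of k] assms by simp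
  have eta_Suc: "zeta k + Dnorm2 d (bh (Suc (Suc k)) - bf (Suc k)) / 2 \<le> eta (Suc k)"
  proof -
    have "dinner d (bf (Suc k) - bhat k) (bh (Suc (Suc k)) - bf (Suc k))
        = - dinner d (bf (Suc k) - bhat k) (bf (Suc k) - bh (Suc (Suc k)))"
      by (simp add: dinner_diff_right)
    thus ?thesis
      using eta_Suc_lower_bound[of k] Dnorm2_split[of d "bh (Suc (Suc k))" "bhat k" "bf (Suc k)"]
      unfolding center zeta_def by linarith
  qed
  show "w (Suc k) \<le> w k - Dnorm2 d (bf (Suc k) - bh (Suc k)) / 2
                         - Dnorm2 d (bh (Suc (Suc k)) - bf (Suc k)) / 2"
    using eta_Suc zeta_ge_eta[of k] unfolding w_def center by linarith
  show "w (Suc k) \<le> v k"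
    using eta_Suc Dnorm2_ge_0[of "bh (Suc (Suc k)) - bf (Suc k)"]
      Dnorm2_ge_0[of "bf (Suc k) - bhat k"]
    unfolding w_def center v_def zeta_def by linarith
qed

lemma serious_step_w:
  assumes "serious k"
  shows "w (Suc k) \<le> 2 * v k"
proof -
  let ?x = "bhat k" and ?z = "bf (Suc k)" and ?y' = "bh (Suc (Suc k))"
  have center: "bhat (Suc k) = ?z" using bhat_Suc[of k] assms by simp
  have "model k - Dnorm2 d (?z - ?x) / 2 \<le> eta (Suc k)"
    using eta_Suc_lower_bound[of k] Dnorm2_diff[of d "?y' - ?z" "?z - ?x"]
      Dnorm2_ge_0[of "(?y' - ?z) - (?z - ?x)"] dinner_sym[of d "?y' - ?z" "?z - ?x"]
      dinner_diff_right[of d "?z - ?x" ?z ?y'] dinner_diff_right[of d "?z - ?x" ?y' ?z]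
    unfolding center by (simp add: Dnorm2_commute[of d ?z ?y'])
  moreover have "obj ?z \<le> obj ?x - \<gamma> * v k"
    using assms by (simp add: serious_def v_def algebra_simps)
  moreover have "0 \<le> \<gamma> * v k" using \<gamma>_pos v_nonneg[of k] by simp
  ultimately show ?thesis
    using v_ge[of k] v_nonneg[of k] v_def[of k] unfolding w_def center by linarith
qed

lemma sigma_nonneg: "0 \<le> \<sigma> k"
  using v_nonneg by (simp add: \<sigma>_def)

lemma obj_descent: "obj (bhat (Suc k)) \<le> obj (bhat k) - \<gamma> * \<sigma> k"
  using bhat_Suc[of k] by (auto simp: \<sigma>_def serious_def v_def algebra_simps)

lemma obj_decreasing: "obj (bhat (Suc k)) \<le> obj (bhat k)"
  using obj_descent[of k] sigma_nonneg[of k] \<gamma>_pos by (smt (verit) mult_nonneg_nonneg)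

lemma null_step_gap: "\<not> serious k \<Longrightarrow> (1 - \<gamma>) * v k < obj (bf (Suc k)) - model k"
  by (simp add: serious_def v_def algebra_simps)

lemma fejer_step:
  assumes q: "\<And>\<beta>. obj q \<le> obj \<beta>"
  shows "Dnorm2 d (bhat (Suc k) - q) \<le> Dnorm2 d (bhat k - q) + 2 * \<sigma> k"
proof (cases "serious k")
  case True
  let ?x = "bhat k" and ?z = "bf (Suc k)"
  have "model k + dinner d (?z - ?x) (?z - q) \<le> obj ?x"
    using obj_lower_bound[of k q] q[of ?x] by linarith
  moreover have "Dnorm2 d (?z - q) = Dnorm2 d (?x - q) - Dnorm2 d (?z - ?x) + 2 * dinner d (?z - ?x) (?z - q)"
    using Dnorm2_split[of d ?z q ?x] dinner_sym[of d "?x - q" "?z - ?x"]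
      dinner_diff_right[of d "?z - ?x" ?x q] dinner_diff_right[of d "?z - ?x" ?z q]
      Dnorm2_dinner[of d "?z - ?x"] dinner_diff_right[of d "?z - ?x" ?z ?x]
    by (simp add: algebra_simps)
  ultimately show ?thesis
    using True bhat_Suc[of k] Dnorm2_ge_0[of "?z - ?x"] by (simp add: \<sigma>_def v_def)
next
  case False thus ?thesis using bhat_Suc[of k] by (simp add: \<sigma>_def)
qed

definition lyap :: "real^'n \<Rightarrow> nat \<Rightarrow> real" where
  "lyap q k = Dnorm2 d (bhat k - q) + (2 / \<gamma>) * (obj (bhat k) - obj q)"

lemma lyap_decreasing:
  assumes "\<And>\<beta>. obj q \<le> obj \<beta>"
  shows "lyap q (Suc k) \<le> lyap q k"
proof -
  have "(2 / \<gamma>) * (obj (bhat (Suc k)) - obj q) \<le> (2 / \<gamma>) * (obj (bhat k) - \<gamma> * \<sigma> k - obj q)"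
    using obj_descent[of k] \<gamma>_pos by (intro mult_left_mono) auto
  also have "\<dots> = (2 / \<gamma>) * (obj (bhat k) - obj q) - 2 * \<sigma> k"
    using \<gamma>_pos by (simp add: field_simps)
  finally show ?thesis using fejer_step[OF assms, of k] by (simp add: lyap_def)
qed

lemma Dnorm2_le_lyap:
  assumes "\<And>\<beta>. obj q \<le> obj \<beta>"
  shows "Dnorm2 d (bhat k - q) \<le> lyap q k"
  using assms[of "bhat k"] \<gamma>_pos by (simp add: lyap_def)

end

(* Runs in which no serious step occurs from index N on: the centre is frozen, w
   decreases, the two steps y and z merge and the linearization error of h vanishes, so w
   -> 0. *)
locale alin_null_tail = alin +
  fixes N :: nat
  assumes null_tail: "\<And>k. N \<le> k \<Longrightarrow> \<not> serious k"
begin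

lemma center_const: "bhat (n + N) = bhat N"
  by (induction n) (simp_all add: bhat_Suc null_tail)

lemma w_tail_descent: "N \<le> k \<Longrightarrow> w (Suc k) \<le> w k - Dnorm2 d (bf (Suc k) - bh (Suc k)) / 2"
  using null_step_w(1)[OF null_tail, of k] Dnorm2_ge_0[of "bh (Suc (Suc k)) - bf (Suc k)"]
  by linarith

lemma w_tail_decseq: "decseq (\<lambda>n. w (n + N))"
proof (rule decseq_SucI)
  fix n
  show "w (Suc n + N) \<le> w (n + N)"
    using w_tail_descent[of "n + N"] Dnorm2_ge_0[of "bf (Suc (n + N)) - bh (Suc (n + N))"] by simp
qed

(* w decreases and is bounded below, so |z - y|_D^2 <= 2 (w k - w (k+1)) tends to 0. *)
lemma gap_tendsto: "(\<lambda>n. bf (Suc (n + N)) - bh (Suc (n + N))) \<longlonglongrightarrow> 0"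
proof -
  obtain l where l: "(\<lambda>n. w (n + N)) \<longlonglongrightarrow> l"
    using decseq_convergent[OF w_tail_decseq, of 0] w_nonneg by blast
  have "(\<lambda>n. 2 * (w (n + N) - w (Suc n + N))) \<longlonglongrightarrow> 2 * (l - l)"
    using LIMSEQ_Suc[OF l] by (intro tendsto_intros l) simp
  hence bound: "(\<lambda>n. 2 * (w (n + N) - w (Suc n + N))) \<longlonglongrightarrow> 0" by simp
  have "Dnorm2 d (bf (Suc (n + N)) - bh (Suc (n + N))) \<le> 2 * (w (n + N) - w (Suc n + N))" for n
    using w_tail_descent[of "n + N"] by simp
  hence "(\<lambda>n. Dnorm2 d (bf (Suc (n + N)) - bh (Suc (n + N)))) \<longlonglongrightarrow> 0"
    using Dnorm2_ge_0 by (intro real_tendsto_sandwich[OF _ _ tendsto_const bound]) auto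
  thus ?thesis by (rule tendsto_zero_of_Dnorm2[OF d_pos])
qed

(* y and z stay in a fixed ball around the frozen centre: their squared D-distances to
   it are bounded by 2 w N. *)
lemma tail_iterates_bounded:
  obtains R where "\<And>n. bf (Suc (n + N)) \<in> cball (bhat N) R" "\<And>n. bh (Suc (n + N)) \<in> cball (bhat N) R"
proof -
  obtain R where R: "\<And>u. Dnorm2 d (u - bhat N) \<le> 2 * w N \<Longrightarrow> u \<in> cball (bhat N) R"
    using Dnorm2_sublevel_bounded[OF d_pos] by blast
  have w_le: "w (n + N) \<le> w N" for n
    using decseqD[OF w_tail_decseq, of 0 n] by simp
  have "Dnorm2 d (bf (Suc (n + N)) - bhat N) \<le> 2 * w N" for n
    using v_ge[of "n + N"] v_le_w[of "n + N"] w_le[of n] center_const[of n] by simp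
  moreover have "Dnorm2 d (bh (Suc (n + N)) - bhat N) \<le> 2 * w N" for n
    using w_ge[of "n + N"] w_le[of n] center_const[of n] by simp
  ultimately show ?thesis by (intro that[of R] R)
qed

(* Since the test fails at every step, (1 - gamma) v is below the linearization error of h
   at z, which vanishes; and w (k+1) <= v k. *)
lemma w_tendsto_null_tail: "w \<longlonglongrightarrow> 0"
proof -
  obtain R where a: "\<And>n. bf (Suc (n + N)) \<in> cball (bhat N) R"
    and b: "\<And>n. bh (Suc (n + N)) \<in> cball (bhat N) R"
    using tail_iterates_bounded by metis
  have "(\<lambda>n. h (bf (Suc (n + N))) - h (bh (Suc (n + N)))
              - sh (Suc (n + N)) \<bullet> (bf (Suc (n + N)) - bh (Suc (n + N)))) \<longlonglongrightarrow> 0"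
    using sh_subgrad_ineq[unfolded lin_h_def]
    by (rule linearization_error_tendsto_zero[OF h_continuous a b gap_tendsto])
  moreover have "obj (bf (Suc k)) - model k
      = h (bf (Suc k)) - h (bh (Suc k)) - sh (Suc k) \<bullet> (bf (Suc k) - bh (Suc k))" for k
    by (simp add: obj_def model_def lin_h_def)
  ultimately have "(\<lambda>n. (obj (bf (Suc (n + N))) - model (n + N)) / (1 - \<gamma>)) \<longlonglongrightarrow> 0 / (1 - \<gamma>)"
    using \<gamma>_less_1 by (intro tendsto_divide tendsto_const) simp_all
  hence bound: "(\<lambda>n. (obj (bf (Suc (n + N))) - model (n + N)) / (1 - \<gamma>)) \<longlonglongrightarrow> 0"
    by simp
  have "w (Suc (n + N)) \<le> (obj (bf (Suc (n + N))) - model (n + N)) / (1 - \<gamma>)" for n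
  proof -
    have "w (Suc (n + N)) \<le> v (n + N)" by (rule null_step_w(2)[OF null_tail]) simp
    also have "\<dots> \<le> (obj (bf (Suc (n + N))) - model (n + N)) / (1 - \<gamma>)"
      using null_step_gap[OF null_tail, of "n + N"] \<gamma>_less_1
      by (simp add: pos_le_divide_eq mult.commute)
    finally show ?thesis .
  qed
  hence "(\<lambda>n. w (n + Suc N)) \<longlonglongrightarrow> 0"
    using w_nonneg by (intro real_tendsto_sandwich[OF _ _ tendsto_const bound]) auto
  thus ?thesis by (rule LIMSEQ_offset)
qed

end

locale alin_min = alin +
  fixes p
  assumes p_min: "\<And>\<beta>. f p + h p \<le> f \<beta> + h \<beta>"
begin

lemma obj_p_min: "obj p \<le> obj \<beta>"
  using p_min by (simp add: obj_def)

(* The objective decreases and is bounded below, so the certified decreases tend to 0. *)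
lemma sigma_tendsto: "\<sigma> \<longlonglongrightarrow> 0"
proof -
  obtain l where l: "(\<lambda>k. obj (bhat k)) \<longlonglongrightarrow> l"
    using decseq_convergent[of "\<lambda>k. obj (bhat k)" "obj p"] obj_p_min
      decseq_SucI[of "\<lambda>k. obj (bhat k)", OF obj_decreasing] by blast
  have "(\<lambda>k. (obj (bhat k) - obj (bhat (Suc k))) / \<gamma>) \<longlonglongrightarrow> (l - l) / \<gamma>"
    by (intro tendsto_intros l LIMSEQ_Suc[OF l]) (use \<gamma>_pos in simp)
  hence bound: "(\<lambda>k. (obj (bhat k) - obj (bhat (Suc k))) / \<gamma>) \<longlonglongrightarrow> 0" by simp
  have "\<sigma> k \<le> (obj (bhat k) - obj (bhat (Suc k))) / \<gamma>" for k
    using obj_descent[of k] \<gamma>_pos by (simp add: field_simps)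
  thus ?thesis
    using sigma_nonneg by (intro real_tendsto_sandwich[OF _ _ tendsto_const bound]) auto
qed

(* With infinitely many serious steps: after a serious step w is below 2 sigma, and null
   steps do not increase it. *)
lemma w_tendsto_infinitely_serious:
  assumes serious_freq: "\<And>N. \<exists>k\<ge>N. serious k"
  shows "w \<longlonglongrightarrow> 0"
proof (rule LIMSEQ_I)
  fix r :: real assume r: "0 < r"
  obtain N where N: "\<And>k. k \<ge> N \<Longrightarrow> norm (\<sigma> k - 0) < r / 2"
    using LIMSEQ_D[OF sigma_tendsto, of "r / 2"] r by auto
  obtain k0 where k0: "k0 \<ge> N" "serious k0" using serious_freq by blast
  have after_serious: "w (Suc k) < r" if "k \<ge> N" "serious k" for k
    using N[OF that(1)] serious_step_w[OF that(2)] that(2) by (simp add: \<sigma>_def)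
  have "w (Suc k0 + j) < r" for j
  proof (induction j)
    case 0 thus ?case using after_serious k0 by simp
  next
    case (Suc j)
    show ?case
    proof (cases "serious (Suc k0 + j)")
      case True thus ?thesis using after_serious[of "Suc k0 + j"] k0 by simp
    next
      case False
      have "w (Suc (Suc k0 + j)) \<le> w (Suc k0 + j)"
        using null_step_w(1)[OF False] Dnorm2_ge_0[of "bf (Suc (Suc k0 + j)) - bh (Suc (Suc k0 + j))"]
          Dnorm2_ge_0[of "bh (Suc (Suc (Suc k0 + j))) - bf (Suc (Suc k0 + j))"] by linarith
      thus ?thesis using Suc.IH by simp
    qed
  qed
  hence "norm (w n - 0) < r" if "n \<ge> Suc k0" for n
    using that w_nonneg[of n] le_Suc_ex[OF that] by auto
  thus "\<exists>no. \<forall>n\<ge>no. norm (w n - 0) < r" by blast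
qed

lemma w_tendsto: "w \<longlonglongrightarrow> 0"
proof (cases "\<forall>N. \<exists>k\<ge>N. serious k")
  case True thus ?thesis by (intro w_tendsto_infinitely_serious) blast
next
  case False
  then obtain N where "\<And>k. N \<le> k \<Longrightarrow> \<not> serious k" by auto
  then interpret alin_null_tail f h d \<gamma> bhat bf sf bh sh N by unfold_locales
  show ?thesis by (rule w_tendsto_null_tail)
qed

lemma v_tendsto: "v \<longlonglongrightarrow> 0"
proof -
  have bound: "(\<lambda>k. 2 * w k) \<longlonglongrightarrow> 0" using tendsto_mult_right_zero[OF w_tendsto] by simp
  show ?thesis using v_nonneg v_le_w
    by (intro real_tendsto_sandwich[OF _ _ tendsto_const bound]) auto
qed

lemma f_step_tendsto: "(\<lambda>k. bf (Suc k) - bhat k) \<longlonglongrightarrow> 0"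
proof (rule tendsto_zero_of_Dnorm2[OF d_pos])
  show "(\<lambda>k. Dnorm2 d (bf (Suc k) - bhat k)) \<longlonglongrightarrow> 0"
    using Dnorm2_ge_0 v_ge by (intro real_tendsto_sandwich[OF _ _ tendsto_const v_tendsto]) auto
qed

lemma h_step_tendsto: "(\<lambda>k. bh (Suc k) - bhat k) \<longlonglongrightarrow> 0"
proof -
  have bound: "(\<lambda>k. 2 * w k) \<longlonglongrightarrow> 0" using tendsto_mult_right_zero[OF w_tendsto] by simp
  have "Dnorm2 d (bh (Suc k) - bhat k) \<le> 2 * w k" for k using w_ge[of k] by simp
  hence "(\<lambda>k. Dnorm2 d (bh (Suc k) - bhat k)) \<longlonglongrightarrow> 0"
    using Dnorm2_ge_0 by (intro real_tendsto_sandwich[OF _ _ tendsto_const bound]) auto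
  thus ?thesis by (rule tendsto_zero_of_Dnorm2[OF d_pos])
qed

(* The centres stay in a ball around p, by the Lyapunov function for p. *)
lemma centers_bounded: obtains R where "\<And>k. bhat k \<in> cball p R"
proof -
  obtain R where R: "\<And>u. Dnorm2 d (u - p) \<le> lyap p 0 \<Longrightarrow> u \<in> cball p R"
    using Dnorm2_sublevel_bounded[OF d_pos] by blast
  have "decseq (lyap p)" by (intro decseq_SucI lyap_decreasing obj_p_min)
  hence "Dnorm2 d (bhat k - p) \<le> lyap p 0" for k
    using Dnorm2_le_lyap[OF obj_p_min, of k] decseqD[of "lyap p" 0 k] by simp
  thus ?thesis using that R by blast
qed

(* Every cluster point of the centres minimizes L: pass to the limit in obj_lower_bound. *)
lemma cluster_point_minimizer:
  assumes r: "strict_mono r" and lim: "(\<lambda>n. bhat (r n)) \<longlonglongrightarrow> x"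
  shows "obj x \<le> obj \<beta>"
proof -
  have step: "(\<lambda>n. bf (Suc (r n)) - bhat (r n)) \<longlonglongrightarrow> 0"
    using LIMSEQ_subseq_LIMSEQ[OF f_step_tendsto r] by (simp add: comp_def)
  have "(\<lambda>n. (bf (Suc (r n)) - bhat (r n)) + bhat (r n)) \<longlonglongrightarrow> 0 + x"
    by (intro tendsto_add step lim)
  hence bf_lim: "(\<lambda>n. bf (Suc (r n))) \<longlonglongrightarrow> x" by simp
  have "isCont obj x"
    using f_continuous h_continuous unfolding obj_def[abs_def]
    by (intro continuous_intros) (simp_all add: continuous_on_eq_continuous_at)
  hence "(\<lambda>n. obj (bhat (r n)) - v (r n)
              + dinner d (bf (Suc (r n)) - bhat (r n)) (bf (Suc (r n)) - \<beta>))
         \<longlonglongrightarrow> obj x - 0 + dinner d 0 (x - \<beta>)"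
    using LIMSEQ_subseq_LIMSEQ[OF v_tendsto r]
    unfolding dinner_def comp_def
    by (intro tendsto_intros isCont_tendsto_compose[of x obj] lim step bf_lim) auto
  moreover have "obj (bhat (r n)) - v (r n)
      + dinner d (bf (Suc (r n)) - bhat (r n)) (bf (Suc (r n)) - \<beta>) \<le> obj \<beta>" for n
    using obj_lower_bound[of "r n" \<beta>] by (simp add: v_def)
  ultimately show ?thesis
    by (intro tendsto_le[OF trivial_limit_sequentially tendsto_const]) (auto simp: dinner_def)
qed

(* The centres converge to a minimizer: take a cluster point x, then the Lyapunov
   function for x tends to 0 along a subsequence, hence everywhere. *)
lemma centers_converge: obtains x where "\<And>\<beta>. obj x \<le> obj \<beta>" "bhat \<longlonglongrightarrow> x"
proof -
  obtain R where "\<And>k. bhat k \<in> cball p R" using centers_bounded by metis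
  then obtain x r where r: "strict_mono r" and lim: "(bhat \<circ> r) \<longlonglongrightarrow> x"
    using compact_imp_seq_compact[OF compact_cball, of p R] unfolding seq_compact_def by metis
  hence lim': "(\<lambda>n. bhat (r n)) \<longlonglongrightarrow> x" by (simp add: comp_def)
  have x_min: "obj x \<le> obj \<beta>" for \<beta> by (rule cluster_point_minimizer[OF r lim'])
  have "(\<lambda>n. lyap x (r n)) \<longlonglongrightarrow> Dnorm2 d (x - x) + (2 / \<gamma>) * (obj x - obj x)"
    unfolding lyap_def using f_continuous h_continuous
    by (intro tendsto_intros lim' isCont_tendsto_compose[of x obj] Dnorm2_tendsto)
       (simp_all add: obj_def[abs_def] continuous_on_eq_continuous_at)
  hence "(\<lambda>n. lyap x (r n)) \<longlonglongrightarrow> 0" by simp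
  moreover have "decseq (lyap x)" by (intro decseq_SucI lyap_decreasing x_min)
  moreover have "0 \<le> lyap x k" for k
    using Dnorm2_le_lyap[OF x_min, of k] Dnorm2_ge_0[of "bhat k - x"] by linarith
  ultimately have bound: "lyap x \<longlonglongrightarrow> 0"
    using decseq_tendsto_zero_from_subseq r by blast
  have "(\<lambda>k. Dnorm2 d (bhat k - x)) \<longlonglongrightarrow> 0"
    using Dnorm2_ge_0 Dnorm2_le_lyap[OF x_min]
    by (intro real_tendsto_sandwich[OF _ _ tendsto_const bound]) auto
  hence "(\<lambda>k. bhat k - x) \<longlonglongrightarrow> 0" by (rule tendsto_zero_of_Dnorm2[OF d_pos])
  hence "bhat \<longlonglongrightarrow> x" by (simp add: LIM_zero_iff)
  with x_min that show ?thesis by blast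
qed

lemma iterates_tendsto:
  assumes "bhat \<longlonglongrightarrow> x"
  shows "bf \<longlonglongrightarrow> x" and "bh \<longlonglongrightarrow> x"
proof -
  have "(\<lambda>k. (bf (Suc k) - bhat k) + bhat k) \<longlonglongrightarrow> 0 + x"
    by (rule tendsto_add[OF f_step_tendsto assms])
  hence "(\<lambda>k. bf (Suc k)) \<longlonglongrightarrow> x" by simp
  thus "bf \<longlonglongrightarrow> x" by (rule filterlim_sequentially_Suc[THEN iffD1])
  have "(\<lambda>k. (bh (Suc k) - bhat k) + bhat k) \<longlonglongrightarrow> 0 + x"
    by (rule tendsto_add[OF h_step_tendsto assms])
  hence "(\<lambda>k. bh (Suc k)) \<longlonglongrightarrow> x" by simp
  thus "bh \<longlonglongrightarrow> x" by (rule filterlim_sequentially_Suc[THEN iffD1])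
qed

lemma subgrad_sum_tendsto: "(\<lambda>k. sf k + sh k) \<longlonglongrightarrow> 0"
proof -
  have "(\<lambda>k. - diag_mult d (bf (Suc k) - bhat k)) \<longlonglongrightarrow> - diag_mult d 0"
    by (intro tendsto_minus diag_mult_tendsto f_step_tendsto)
  hence "(\<lambda>k. sf (Suc k) + sh (Suc k)) \<longlonglongrightarrow> 0" by (simp add: sum_subgrads)
  thus ?thesis by (rule filterlim_sequentially_Suc[THEN iffD1])
qed

lemma accumulation_subgrads:
  assumes x: "bhat \<longlonglongrightarrow> x" and r: "strict_mono r"
    and a: "(\<lambda>n. sf (r n)) \<longlonglongrightarrow> a" and b: "(\<lambda>n. sh (r n)) \<longlonglongrightarrow> b"
  shows "a \<in> subgrad f x" and "b \<in> subgrad h x" and "a + b = 0"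
proof -
  have bf_r: "(\<lambda>n. bf (r n)) \<longlonglongrightarrow> x" and bh_r: "(\<lambda>n. bh (r n)) \<longlonglongrightarrow> x"
    using LIMSEQ_subseq_LIMSEQ[OF iterates_tendsto(1)[OF x] r]
      LIMSEQ_subseq_LIMSEQ[OF iterates_tendsto(2)[OF x] r] by (simp_all add: comp_def)
  show "a \<in> subgrad f x"
    using f_continuous sf_subgrad
    by (intro subgrad_closed[OF _ bf_r a]) (simp_all add: continuous_on_eq_continuous_at)
  have "eventually (\<lambda>n. sh (r n) \<in> subgrad h (bh (r n))) sequentially"
  proof (rule eventually_sequentiallyI[of 1])
    fix n :: nat assume "1 \<le> n"
    hence "r n = Suc (r n - 1)" using seq_suble[OF r, of n] by simp
    thus "sh (r n) \<in> subgrad h (bh (r n))" by (metis sh_subgrad)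
  qed
  thus "b \<in> subgrad h x"
    using h_continuous by (intro subgrad_closed[OF _ bh_r b]) (simp_all add: continuous_on_eq_continuous_at)
  have "(\<lambda>n. sf (r n) + sh (r n)) \<longlonglongrightarrow> 0"
    using LIMSEQ_subseq_LIMSEQ[OF subgrad_sum_tendsto r] by (simp add: comp_def)
  with tendsto_add[OF a b] show "a + b = 0" by (rule LIMSEQ_unique)
qed

end

theorem theorem1:
  fixes f h :: "real^'n \<Rightarrow> real" and d :: "real^'n" and \<gamma> :: real
    and bhat bf sf bh sh :: "nat \<Rightarrow> real^'n"
  assumes "convex_on UNIV f" and "convex_on UNIV h"
    and "\<exists>x. is_minimizer (\<lambda>\<beta>. f \<beta> + h \<beta>) x"
    and "\<forall>j. d $ j > 0"
    and "0 < \<gamma>" and "\<gamma> < 1"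
    and "alin_run f h d \<gamma> bhat bf sf bh sh"
  shows "\<exists>\<beta>s. is_minimizer (\<lambda>\<beta>. f \<beta> + h \<beta>) \<beta>s \<and> bhat \<longlonglongrightarrow> \<beta>s \<and>
           (\<forall>a b r. strict_mono r \<and> (\<lambda>n. sf (r n)) \<longlonglongrightarrow> a \<and> (\<lambda>n. sh (r n)) \<longlonglongrightarrow> b
              \<longrightarrow> a \<in> subgrad f \<beta>s \<and> b \<in> subgrad h \<beta>s \<and> a + b = 0)"
proof -
  obtain p where "is_minimizer (\<lambda>\<beta>. f \<beta> + h \<beta>) p" using assms(3) by blast
  then interpret alin_min f h d \<gamma> bhat bf sf bh sh p
    using assms by unfold_locales (auto simp: is_minimizer_def)
  obtain x where x_min: "\<And>\<beta>. obj x \<le> obj \<beta>" and x_lim: "bhat \<longlonglongrightarrow> x"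
    using centers_converge by blast
  have "is_minimizer (\<lambda>\<beta>. f \<beta> + h \<beta>) x"
    using x_min by (simp add: is_minimizer_def obj_def)
  with x_lim accumulation_subgrads[OF x_lim] show ?thesis by blast
qed

end
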